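(* Let $0<1/n_0\ll\delta\ll 1$, and let $t,k,n\in\mathbb N$ with $n\geq n_0$ and $k^2-k+2\leq n\leq k^2+k+1$. Let $\mathcal H$ be an $n$-vertex hypergraph with codegree at most $t$ such that $|V(e)|\geq(1-\delta)\sqrt n$ for every edge $e$, and such that $\mathcal H$ has at most $t/(2\delta)$ edges of size at most $k$. If $e\in\mathcal H$ satisfies $|V(e)|\leq k$, then $|N(e)|\leq tn-3$.
   Context: Constant hierarchies: a statement holding whenever $0<a\ll b\le 1$ means there is a non-decreasing function $f:(0,1]\to(0,1]$ such that it holds for all $a,b$ with $a\leq f(b)$; constants are chosen from right to left. A hypergraph $\mathcal H$ has a finite vertex set $V(\mathcal H)$ and a finite set of edges, each edge $e$ with a nonempty set $V(e)\subseteq V(\mathcal H)$ (multiple edges allowed); $n$-vertex means $|V(\mathcal H)|=n$; the size of $e$ is $|V(e)|$. The codegree of $\mathcal H$ is the maximum over distinct vertices $u,v$ of the number of edges containing both. $N(e)$ is the set of edges $f\neq e$ with $V(e)\cap V(f)\neq\emptyset$. *)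

theory Defs
  imports Complex_Main
begin

text \<open>A hypergraph with vertex set Vs, a finite set E of edge labels (allowing
multiple edges with the same vertex set), and a map V sending each edge to its
nonempty vertex set.\<close>
definition hypergraph :: "'v set \<Rightarrow> 'e set \<Rightarrow> ('e \<Rightarrow> 'v set) \<Rightarrow> bool" where
  "hypergraph Vs E V \<longleftrightarrow> finite Vs \<and> finite E \<and> (\<forall>e\<in>E. V e \<noteq> {} \<and> V e \<subseteq> Vs)"

definition codegree :: "'v set \<Rightarrow> 'e set \<Rightarrow> ('e \<Rightarrow> 'v set) \<Rightarrow> nat" where
  "codegree Vs E V =
     Max (insert 0 {card {e\<in>E. u \<in> V e \<and> w \<in> V e} | u w. u \<in> Vs \<and> w \<in> Vs \<and> u \<noteq> w})"

definition nbhd :: "'e set \<Rightarrow> ('e \<Rightarrow> 'v set) \<Rightarrow> 'e \<Rightarrow> 'e set" where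
  "nbhd E V e = {f\<in>E. f \<noteq> e \<and> V e \<inter> V f \<noteq> {}}"

end

(* Double counting the pairs (v, f) with v \<in> e, f \<noteq> e, v \<in> f, weighted by |f| - 1, the codegree
   bound gives  sum over f \<noteq> e of |f \<inter> e| (|f| - 1) \<le> |e| ((n - 1) t - |e| + 1).
   Each neighbour f of e contributes at least |f| - 1 to this sum: at least k if |f| > k, and at
   least (1 - \<delta>) sqrt n - 1 \<ge> (1 - 2\<delta>) k otherwise, because k < sqrt n + 1/2.  Since there are
   at most t/(2\<delta>) edges of size at most k, e among them, dividing by k yields
   |N(e)| \<le> tn - |e| + 1 - 2\<delta>, and |e| \<ge> (1 - \<delta>) sqrt n \<ge> 4. *)

theory Submission
  imports Defs
begin

lemma hypergraph_edge_finite: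
  assumes "hypergraph Vs E V" "f \<in> E"
  shows "finite (V f)"
  using assms unfolding hypergraph_def by (meson finite_subset)

lemma hypergraph_edge_card_pos:
  assumes "hypergraph Vs E V" "f \<in> E"
  shows "0 < card (V f)"
  using assms hypergraph_edge_finite unfolding hypergraph_def by (simp add: card_gt_0_iff)

lemma card_edges_through_pair_le_codegree:
  assumes H: "hypergraph Vs E V" and "u \<in> Vs" "w \<in> Vs" "u \<noteq> w"
  shows "card {f\<in>E. u \<in> V f \<and> w \<in> V f} \<le> codegree Vs E V"
proof -
  have "{card {f\<in>E. u \<in> V f \<and> w \<in> V f} | u w. u \<in> Vs \<and> w \<in> Vs \<and> u \<noteq> w}
        \<subseteq> (\<lambda>(u, w). card {f\<in>E. u \<in> V f \<and> w \<in> V f}) ` (Vs \<times> Vs)"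
    by auto
  moreover have "finite Vs" using H unfolding hypergraph_def by blast
  ultimately show ?thesis
    unfolding codegree_def using assms by (intro Max_ge) (auto intro: finite_subset[OF _ finite_imageI])
qed

lemma sum_edges_through_vertex_le:
  assumes H: "hypergraph Vs E V" and v: "v \<in> Vs"
  shows "(\<Sum>f\<in>{f\<in>E. v \<in> V f}. card (V f) - 1) \<le> (card Vs - 1) * codegree Vs E V"
proof -
  have finVs: "finite Vs" and finE: "finite E" and sub: "\<And>f. f \<in> E \<Longrightarrow> V f \<subseteq> Vs"
    using H unfolding hypergraph_def by auto
  have "(\<Sum>f\<in>{f\<in>E. v \<in> V f}. card (V f) - 1)
      = (\<Sum>f\<in>{f\<in>E. v \<in> V f}. card {u\<in>Vs - {v}. u \<in> V f})"
  proof (rule sum.cong[OF refl])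
    fix f assume "f \<in> {f\<in>E. v \<in> V f}"
    then have "{u\<in>Vs - {v}. u \<in> V f} = V f - {v}" and "v \<in> V f"
      using sub by auto
    then show "card (V f) - 1 = card {u\<in>Vs - {v}. u \<in> V f}" by simp
  qed
  also have "\<dots> = (\<Sum>u\<in>Vs - {v}. card {f\<in>E. v \<in> V f \<and> u \<in> V f})"
    using finE finVs by (intro sum_multicount_gen) (auto intro: arg_cong[where f = card])
  also have "\<dots> \<le> (\<Sum>u\<in>Vs - {v}. codegree Vs E V)"
    using v by (intro sum_mono card_edges_through_pair_le_codegree[OF H]) auto
  also have "\<dots> = (card Vs - 1) * codegree Vs E V"
    using v finVs by simp
  finally show ?thesis .
qed

lemma sum_overlap_weights_le:
  assumes H: "hypergraph Vs E V" and e: "e \<in> E"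
  shows "(\<Sum>f\<in>E - {e}. card (V f \<inter> V e) * (card (V f) - 1)) + card (V e) * (card (V e) - 1)
           \<le> card (V e) * ((card Vs - 1) * codegree Vs E V)"
proof -
  have finE: "finite E" and finVe: "finite (V e)" and sub: "V e \<subseteq> Vs"
    using H e hypergraph_edge_finite[OF H e] unfolding hypergraph_def by auto
  have through_v: "(\<Sum>f\<in>{f\<in>E - {e}. v \<in> V f}. card (V f) - 1) + (card (V e) - 1)
      = (\<Sum>f\<in>{f\<in>E. v \<in> V f}. card (V f) - 1)" if "v \<in> V e" for v
  proof -
    have "{f\<in>E. v \<in> V f} = insert e {f\<in>E - {e}. v \<in> V f}" using that e by auto
    then show ?thesis using finE by simp
  qed
  have "(\<Sum>f\<in>E - {e}. card (V f \<inter> V e) * (card (V f) - 1))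
      = (\<Sum>f\<in>E - {e}. \<Sum>v\<in>{v\<in>V e. v \<in> V f}. card (V f) - 1)"
    by (intro sum.cong refl) (simp add: Int_def conj_commute)
  also have "\<dots> = (\<Sum>v\<in>V e. \<Sum>f\<in>{f\<in>E - {e}. v \<in> V f}. card (V f) - 1)"
    using finE finVe by (intro sum.swap_restrict) auto
  finally have "(\<Sum>f\<in>E - {e}. card (V f \<inter> V e) * (card (V f) - 1)) + card (V e) * (card (V e) - 1)
      = (\<Sum>v\<in>V e. (\<Sum>f\<in>{f\<in>E - {e}. v \<in> V f}. card (V f) - 1) + (card (V e) - 1))"
    by (simp add: sum.distrib)
  also have "\<dots> = (\<Sum>v\<in>V e. \<Sum>f\<in>{f\<in>E. v \<in> V f}. card (V f) - 1)"
    by (rule sum.cong[OF refl through_v])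
  also have "\<dots> \<le> (\<Sum>v\<in>V e. (card Vs - 1) * codegree Vs E V)"
    using sub by (intro sum_mono sum_edges_through_vertex_le[OF H]) auto
  finally show ?thesis by simp
qed

lemma sum_nbhd_overlap_weights_le:
  assumes H: "hypergraph Vs E V" and ct: "codegree Vs E V \<le> t"
    and e: "e \<in> E" and ek: "card (V e) \<le> k"
  shows "real (\<Sum>f\<in>nbhd E V e. card (V f \<inter> V e) * (card (V f) - 1))
           \<le> k * (t * (real (card Vs) - 1) - card (V e) + 1)"
proof -
  define s where "s = card (V e)"
  define n where "n = card Vs"
  define S where "S = (\<Sum>f\<in>nbhd E V e. card (V f \<inter> V e) * (card (V f) - 1))"
  have finE: "finite E" and finVs: "finite Vs" and sub: "V e \<subseteq> Vs"
    using H e unfolding hypergraph_def by auto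
  have s_pos: "1 \<le> s" using hypergraph_edge_card_pos[OF H e] unfolding s_def by simp
  have n_pos: "1 \<le> n" using s_pos card_mono[OF finVs sub] unfolding s_def n_def by simp
  have "S \<le> (\<Sum>f\<in>E - {e}. card (V f \<inter> V e) * (card (V f) - 1))"
    unfolding S_def using finE by (intro sum_mono2) (auto simp: nbhd_def)
  then have "S + s * (s - 1) \<le> s * ((n - 1) * codegree Vs E V)"
    using sum_overlap_weights_le[OF H e] unfolding s_def n_def by linarith
  also have "\<dots> \<le> s * ((n - 1) * t)" using ct by simp
  finally have "real S + s * (s - 1) \<le> s * ((n - 1) * t)"
    by (metis of_nat_add of_nat_le_iff of_nat_mult)
  then have S_le: "real S \<le> s * (t * (real n - 1) - s + 1)"
    using s_pos n_pos by (simp add: of_nat_diff algebra_simps)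
  then have "0 \<le> real s * (t * (real n - 1) - s + 1)"
    using of_nat_0_le_iff order_trans by blast
  then have "0 \<le> t * (real n - 1) - s + 1"
    using s_pos by (simp add: zero_le_mult_iff)
  then have "real s * (t * (real n - 1) - s + 1) \<le> k * (t * (real n - 1) - s + 1)"
    using ek unfolding s_def by (intro mult_right_mono) auto
  then show ?thesis using S_le unfolding S_def s_def n_def by linarith
qed

lemma card_nbhd_le:
  fixes \<delta> :: real
  assumes H: "hypergraph Vs E V" and ct: "codegree Vs E V \<le> t"
    and e: "e \<in> E" and ek: "card (V e) \<le> k" and \<delta>: "0 \<le> \<delta>"
    and small_edges_large: "\<And>f. f \<in> E \<Longrightarrow> card (V f) \<le> k \<Longrightarrow> (1 - 2*\<delta>) * k + 1 \<le> card (V f)"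
    and few_small_edges: "2*\<delta> * card {f\<in>E. card (V f) \<le> k} \<le> t"
  shows "real (card (nbhd E V e)) \<le> real t * card Vs - card (V e) + 1 - 2*\<delta>"
proof -
  define N where "N = nbhd E V e"
  define Sm where "Sm = {f\<in>E. card (V f) \<le> k}"
  define w where "w f = card (V f \<inter> V e) * (card (V f) - 1)" for f
  have finE: "finite E" using H unfolding hypergraph_def by auto
  have finN: "finite N" and N_sub: "N \<subseteq> E - {e}"
    using finE unfolding N_def nbhd_def by auto
  have k_pos: "0 < real k" using hypergraph_edge_card_pos[OF H e] ek by simp
  have weight_ge: "real k \<le> w f + (if f \<in> Sm then 2*\<delta>*k else 0)" if f: "f \<in> N" for f
  proof -
    have fE: "f \<in> E" and "V f \<inter> V e \<noteq> {}" using f unfolding N_def nbhd_def by auto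
    then have "1 \<le> card (V f \<inter> V e)"
      using hypergraph_edge_finite[OF H fE] by (simp add: Suc_le_eq card_gt_0_iff)
    then have "card (V f) - 1 \<le> w f" unfolding w_def by simp
    moreover have "real (card (V f) - 1) = card (V f) - 1"
      using hypergraph_edge_card_pos[OF H fE] by (simp add: of_nat_diff)
    moreover have "(1 - 2*\<delta>) * k + 1 \<le> card (V f)" if "f \<in> Sm"
      using that small_edges_large fE unfolding Sm_def by blast
    moreover have "k + 1 \<le> card (V f)" if "f \<notin> Sm" using that fE unfolding Sm_def by auto
    ultimately show ?thesis by (auto simp: algebra_simps)
  qed
  have "real k * card N = (\<Sum>f\<in>N. real k)" by simp
  also have "\<dots> \<le> (\<Sum>f\<in>N. w f + (if f \<in> Sm then 2*\<delta>*k else 0))"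
    by (rule sum_mono) (rule weight_ge)
  also have "\<dots> = real (\<Sum>f\<in>N. w f) + 2*\<delta>*k * card (N \<inter> Sm)"
    using finN by (simp add: sum.distrib sum.If_cases)
  finally have count: "real k * card N \<le> real (\<Sum>f\<in>N. w f) + 2*\<delta>*k * card (N \<inter> Sm)" .
  have "e \<in> Sm" "finite Sm" using e ek finE unfolding Sm_def by auto
  have "card (N \<inter> Sm) \<le> card (Sm - {e})"
    using \<open>finite Sm\<close> N_sub by (intro card_mono) auto
  also have "\<dots> = card Sm - 1" using \<open>e \<in> Sm\<close> by simp
  finally have "real (card (N \<inter> Sm)) \<le> real (card Sm) - 1"
    using \<open>e \<in> Sm\<close> \<open>finite Sm\<close> card_gt_0_iff[of Sm] by (auto simp: of_nat_diff)
  then have "2*\<delta>*k * card (N \<inter> Sm) \<le> 2*\<delta>*k * (real (card Sm) - 1)"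
    using \<delta> k_pos by (intro mult_left_mono) auto
  also have "\<dots> = k * (2*\<delta> * card Sm - 2*\<delta>)" by (simp add: algebra_simps)
  also have "\<dots> \<le> k * (t - 2*\<delta>)"
    using few_small_edges k_pos unfolding Sm_def by (intro mult_left_mono) auto
  finally have "real k * card N \<le> k * (t * (real (card Vs) - 1) - card (V e) + 1 + (t - 2*\<delta>))"
    using count sum_nbhd_overlap_weights_le[OF H ct e ek]
    unfolding N_def w_def by (simp add: algebra_simps)
  then have "real (card N) \<le> t * (real (card Vs) - 1) - card (V e) + 1 + (t - 2*\<delta>)"
    using k_pos by (simp add: mult_le_cancel_left)
  then show ?thesis unfolding N_def by (simp add: algebra_simps)
qed

lemma min_edge_size_bounds:
  fixes \<delta> :: real and k n :: nat
  assumes \<delta>: "0 < \<delta>" "\<delta> \<le> 1/4" and n_large: "9 / \<delta>\<^sup>2 \<le> n" and k_n: "k\<^sup>2 - k + 2 \<le> n"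
  shows "(1 - 2*\<delta>) * k + 1 \<le> (1 - \<delta>) * sqrt n" and "4 \<le> (1 - \<delta>) * sqrt n"
proof -
  have "3 / \<delta> = sqrt (9 / \<delta>\<^sup>2)" using \<delta> by (simp add: real_sqrt_divide)
  also have "\<dots> \<le> sqrt n" using n_large by (rule real_sqrt_le_mono)
  finally have sqrt_large: "3 / \<delta> \<le> sqrt n" .
  then have three_le: "3 \<le> \<delta> * sqrt n" using \<delta> by (simp add: field_simps)
  have "(real k - 1/2)\<^sup>2 < real k ^ 2 - k + 2" by (simp add: power2_eq_square algebra_simps)
  also have "\<dots> = real (k\<^sup>2 - k + 2)" using le_square[of k] by (simp add: power2_eq_square of_nat_diff)
  also have "\<dots> \<le> n" using k_n by simp
  finally have "real k - 1/2 < sqrt n" by (rule real_less_rsqrt)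
  then have "(1 - 2*\<delta>) * k \<le> (1 - 2*\<delta>) * (sqrt n + 1/2)" using \<delta> by (intro mult_left_mono) auto
  then show "(1 - 2*\<delta>) * k + 1 \<le> (1 - \<delta>) * sqrt n" using three_le \<delta> by (simp add: algebra_simps)
  have "12 \<le> 3 / \<delta>" using \<delta> by (simp add: field_simps)
  then have "12 \<le> sqrt n" using sqrt_large by linarith
  then have "3/4 * 12 \<le> (1 - \<delta>) * sqrt n" using \<delta> by (intro mult_mono) auto
  then show "4 \<le> (1 - \<delta>) * sqrt n" by simp
qed

lemma card_nbhd_small_edge_le:
  fixes \<delta> :: real and k n :: nat
  assumes \<delta>: "0 < \<delta>" "\<delta> \<le> 1/4" and n_large: "9 / \<delta>\<^sup>2 \<le> n" and k_n: "k\<^sup>2 - k + 2 \<le> n"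
    and H: "hypergraph Vs E V" and n: "card Vs = n" and ct: "codegree Vs E V \<le> t"
    and edges_large: "\<forall>f\<in>E. (1 - \<delta>) * sqrt n \<le> card (V f)"
    and few_small_edges: "card {f\<in>E. card (V f) \<le> k} \<le> t / (2*\<delta>)"
    and e: "e \<in> E" and ek: "card (V e) \<le> k"
  shows "int (card (nbhd E V e)) \<le> int t * int n - 3"
proof -
  note bounds = min_edge_size_bounds[OF \<delta> n_large k_n]
  have "real (card (nbhd E V e)) \<le> real t * card Vs - card (V e) + 1 - 2*\<delta>"
  proof (rule card_nbhd_le[OF H ct e ek])
    show "(1 - 2*\<delta>) * k + 1 \<le> card (V f)" if "f \<in> E" for f
      using bounds(1) edges_large that by fastforce
    show "2*\<delta> * card {f\<in>E. card (V f) \<le> k} \<le> t"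
      using few_small_edges \<delta> by (simp add: field_simps)
  qed (use \<delta> in simp)
  moreover have "4 \<le> card (V e)" using bounds(2) edges_large e by fastforce
  ultimately have "real_of_int (card (nbhd E V e)) \<le> real_of_int (int t * int n - 3)"
    using \<delta> n by simp
  then show ?thesis by (simp only: of_int_le_iff)
qed

theorem proposition4p5:
  "\<exists>\<delta>0>0. \<forall>\<delta>::real. 0 < \<delta> \<and> \<delta> \<le> \<delta>0 \<longrightarrow>
     (\<exists>n0::nat. \<forall>(t::nat) (k::nat) (n::nat) (Vs::nat set) (E::nat set) (V::nat \<Rightarrow> nat set) e.
        n \<ge> n0 \<longrightarrow> k\<^sup>2 - k + 2 \<le> n \<longrightarrow> n \<le> k\<^sup>2 + k + 1 \<longrightarrow>
        hypergraph Vs E V \<longrightarrow> card Vs = n \<longrightarrow>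
        codegree Vs E V \<le> t \<longrightarrow>
        (\<forall>f\<in>E. real (card (V f)) \<ge> (1 - \<delta>) * sqrt (real n)) \<longrightarrow>
        real (card {f\<in>E. card (V f) \<le> k}) \<le> real t / (2 * \<delta>) \<longrightarrow>
        e \<in> E \<longrightarrow> card (V e) \<le> k \<longrightarrow>
        int (card (nbhd E V e)) \<le> int t * int n - 3)"
  apply (rule exI[of _ "1/4"])
  apply (intro conjI allI impI)
   apply simp
  subgoal for \<delta>
    by (intro exI[of _ "nat \<lceil>9 / \<delta>\<^sup>2\<rceil>"] allI impI card_nbhd_small_edge_le) auto
  done

end
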